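(* Let a Hedonic diversity game contain a red agent $R$, a blue agent $B$ and $m\ge 1$ green agents, where the red, blue and green color classes are exactly $\{R\}$, $\{B\}$ and the set of these $m$ green agents, respectively (other colors may be present). For $j\in[m]$ write $G^jR$ (resp. $G^jB$) for the palette of a set consisting of $j$ green agents and $R$ (resp. $B$), write $RB$ for the palette of $\{R,B\}$, $\mathbf{R}$ for the palette of $\{R\}$, $\mathbf{B}$ for the palette of $\{B\}$, and $\mathbf{G}$ for the palette of any nonempty set of green agents only. Let $\mathcal{M}_G$ be a set of palettes, each of which is the palette of a set containing at least one green agent and at least one agent that is neither red, blue nor green. Suppose the preferences are: $R$: $RB \succ G^mR\succ\cdots\succ G^1R \succ \mathbf{R} \succ$ every other palette; $B$: $G^mB\succ\cdots\succ G^1B \succ RB \succ \mathbf{B}\succ$ every other palette; every green agent: every palette in $\mathcal{M}_G$ (in arbitrary mutual order) $\succ G^mR\succ\cdots\succ G^1R\succ G^mB\succ\cdots\succ G^1B\succ \mathbf{G}\succ$ every other palette. Then every outcome in which some green agent belongs to a coalition whose palette is not in $\mathcal{M}_G$ is neither individually stable nor Nash stable.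
   Context: A Hedonic diversity game consists of a set $N=[n]$ of agents partitioned into color classes $D_1,\dots,D_\gamma$, and, for each agent $i\in N$, a weak order $\succeq_i$ over palettes, where the palette of a nonempty set $X\subseteq N$ is the tuple $\left(|D_c\cap X|/|X|\right)_{c\in[\gamma]}$; agent $i$ compares nonempty sets $X,Y\subseteq N$ through their palettes. A coalition is a nonempty subset of $N$. An outcome is a partition $\Pi$ of $N$ into coalitions; $\Pi_i$ denotes the coalition of $\Pi$ containing agent $i$. Agent $i$ has an NS-deviation if there is $C\in\Pi\cup\{\emptyset\}$ with $i\notin C$ and $C\cup\{i\}\succ_i\Pi_i$; it is an IS-deviation if moreover $C\cup\{i\}\succeq_j C$ for every $j\in C$. $\Pi$ is Nash stable if no agent has an NS-deviation, and individually stable if no agent has an IS-deviation. *)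

theory Defs
  imports Complex_Main "HOL-Library.Disjoint_Sets"
begin

text \<open>Colours are natural numbers 0..<gamma (the paper's [gamma], shifted); col i is the colour
of agent i, so the colour class D_c is the set of agents in N of colour c.\<close>

definition palette :: "('a \<Rightarrow> nat) \<Rightarrow> nat \<Rightarrow> 'a set \<Rightarrow> real list" where
  "palette col \<gamma> X = map (\<lambda>c. real (card {i\<in>X. col i = c}) / real (card X)) [0..<\<gamma>]"

definition palettes :: "'a set \<Rightarrow> ('a \<Rightarrow> nat) \<Rightarrow> nat \<Rightarrow> real list set" where
  "palettes N col \<gamma> = {palette col \<gamma> X | X. X \<subseteq> N \<and> X \<noteq> {}}"

text \<open>pref i p q means p \<succeq>_i q; it is a weak order on palettes.\<close>
definition weak_order_on :: "'p set \<Rightarrow> ('p \<Rightarrow> 'p \<Rightarrow> bool) \<Rightarrow> bool" where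
  "weak_order_on S R \<longleftrightarrow> (\<forall>p\<in>S. \<forall>q\<in>S. R p q \<or> R q p) \<and>
     (\<forall>p\<in>S. \<forall>q\<in>S. \<forall>r\<in>S. R p q \<longrightarrow> R q r \<longrightarrow> R p r)"

definition spref :: "('a \<Rightarrow> real list \<Rightarrow> real list \<Rightarrow> bool) \<Rightarrow> 'a \<Rightarrow> real list \<Rightarrow> real list \<Rightarrow> bool" where
  "spref pref i p q \<longleftrightarrow> pref i p q \<and> \<not> pref i q p"

text \<open>Palette G^j x of a set consisting of x and j agents from the green set Gr
(it does not depend on which j green agents are chosen).\<close>
definition gpal :: "('a \<Rightarrow> nat) \<Rightarrow> nat \<Rightarrow> 'a set \<Rightarrow> nat \<Rightarrow> 'a \<Rightarrow> real list" where
  "gpal col \<gamma> Gr j x = palette col \<gamma> (insert x (SOME S. S \<subseteq> Gr \<and> card S = j))"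

definition coal :: "'a set set \<Rightarrow> 'a \<Rightarrow> 'a set" where
  "coal P i = (THE C. C \<in> P \<and> i \<in> C)"

definition NS_dev :: "('a \<Rightarrow> nat) \<Rightarrow> nat \<Rightarrow> ('a \<Rightarrow> real list \<Rightarrow> real list \<Rightarrow> bool)
    \<Rightarrow> 'a set set \<Rightarrow> 'a \<Rightarrow> bool" where
  "NS_dev col \<gamma> pref P i \<longleftrightarrow> (\<exists>C \<in> P \<union> {{}}. i \<notin> C \<and>
      spref pref i (palette col \<gamma> (insert i C)) (palette col \<gamma> (coal P i)))"

definition IS_dev :: "('a \<Rightarrow> nat) \<Rightarrow> nat \<Rightarrow> ('a \<Rightarrow> real list \<Rightarrow> real list \<Rightarrow> bool)
    \<Rightarrow> 'a set set \<Rightarrow> 'a \<Rightarrow> bool" where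
  "IS_dev col \<gamma> pref P i \<longleftrightarrow> (\<exists>C \<in> P \<union> {{}}. i \<notin> C \<and>
      spref pref i (palette col \<gamma> (insert i C)) (palette col \<gamma> (coal P i)) \<and>
      (\<forall>j\<in>C. pref j (palette col \<gamma> (insert i C)) (palette col \<gamma> C)))"

definition nash_stable where
  "nash_stable N col \<gamma> pref P \<longleftrightarrow> (\<forall>i\<in>N. \<not> NS_dev col \<gamma> pref P i)"

definition indiv_stable where
  "indiv_stable N col \<gamma> pref P \<longleftrightarrow> (\<forall>i\<in>N. \<not> IS_dev col \<gamma> pref P i)"

end

theory Submission
  imports Defs
begin

text \<open>We exhibit an IS-deviation, which is in particular an NS-deviation. A palette determines,
  for the unique red (blue) agent, the composition of its coalition, so unless \<open>R\<close> or \<open>B\<close> prefers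
  to leave, each of them is either in \<open>{R, B}\<close> or together with some greens only. If \<open>{R, B}\<close> is a
  coalition, take a green \<open>g\<close> whose coalition has a palette outside \<open>\<M>\<^sub>G\<close>: \<open>B\<close> joins it when it is
  purely green, and otherwise \<open>g\<close> leaves, since its palette can be neither \<open>G\<^sup>jR\<close> nor \<open>G\<^sup>jB\<close>. If \<open>R\<close>
  and \<open>B\<close> are apart, then \<open>R\<close> joins a lone \<open>B\<close>, and otherwise a green partner of \<open>B\<close> joins \<open>R\<close>'s
  coalition, which is welcomed by all its members.\<close>

lemma nth_palette:
  "c < \<gamma> \<Longrightarrow> palette col \<gamma> X ! c = real (card {i\<in>X. col i = c}) / real (card X)"
  by (simp add: palette_def)

lemma palette_eqI:
  assumes "\<And>c. c < \<gamma> \<Longrightarrow> real (card {i\<in>X. col i = c}) / real (card X)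
                          = real (card {i\<in>Y. col i = c}) / real (card Y)"
  shows "palette col \<gamma> X = palette col \<gamma> Y"
  unfolding palette_def using assms by (intro map_cong) auto

lemma palette_in_palettes: "X \<subseteq> N \<Longrightarrow> X \<noteq> {} \<Longrightarrow> palette col \<gamma> X \<in> palettes N col \<gamma>"
  by (auto simp: palettes_def)

lemma palette_monochrome_eq:
  assumes "finite X" "X \<noteq> {}" "\<forall>i\<in>X. col i = d" "finite Y" "Y \<noteq> {}" "\<forall>i\<in>Y. col i = d"
  shows "palette col \<gamma> X = palette col \<gamma> Y"
proof (rule palette_eqI)
  fix c
  have "{i\<in>X. col i = c} = (if c = d then X else {})" "{i\<in>Y. col i = c} = (if c = d then Y else {})"
    using assms by auto
  then show "real (card {i\<in>X. col i = c}) / real (card X) = real (card {i\<in>Y. col i = c}) / real (card Y)"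
    using assms by simp
qed

lemma monochrome_if_palette_eq:
  assumes eq: "palette col \<gamma> D = palette col \<gamma> X" and "finite D"
    and "finite X" "X \<noteq> {}" "\<forall>i\<in>X. col i = d" and "d < \<gamma>"
  shows "\<forall>i\<in>D. col i = d"
proof -
  have "{i\<in>X. col i = d} = X" using assms by auto
  then have "palette col \<gamma> X ! d = 1"
    using \<open>d < \<gamma>\<close> \<open>finite X\<close> \<open>X \<noteq> {}\<close> by (simp add: nth_palette)
  then have "palette col \<gamma> D ! d = 1" using eq by simp
  then have "real (card {i\<in>D. col i = d}) / real (card D) = 1"
    using \<open>d < \<gamma>\<close> by (simp add: nth_palette)
  then have "card {i\<in>D. col i = d} = card D"
    by (metis div_0 divide_eq_1_iff of_nat_eq_iff zero_neq_one)
  then have "{i\<in>D. col i = d} = D"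
    using \<open>finite D\<close> by (metis (no_types, lifting) card_subset_eq mem_Collect_eq subsetI)
  then show ?thesis by blast
qed

lemma colour_in_if_palette_eq:
  assumes eq: "palette col \<gamma> D = palette col \<gamma> X" and "finite X" "x \<in> X" "col x < \<gamma>"
  shows "\<exists>i\<in>D. col i = col x"
proof -
  have "card {i\<in>X. col i = col x} \<noteq> 0" "card X \<noteq> 0"
    using \<open>finite X\<close> \<open>x \<in> X\<close> by (auto simp: card_eq_0_iff)
  then have "palette col \<gamma> X ! col x \<noteq> 0"
    using \<open>col x < \<gamma>\<close> by (simp add: nth_palette)
  then have "palette col \<gamma> D ! col x \<noteq> 0" using eq by simp
  then have "real (card {i\<in>D. col i = col x}) / real (card D) \<noteq> 0"
    using \<open>col x < \<gamma>\<close> by (simp add: nth_palette)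
  then show ?thesis by (force simp: card_gt_0_iff)
qed

lemma card_colour_insert_monochrome:
  assumes "\<forall>i\<in>S. col i = d" "col x \<noteq> d"
  shows "card {i\<in>insert x S. col i = c} = (if c = col x then 1 else if c = d then card S else 0)"
proof -
  have "{i\<in>insert x S. col i = c} = (if c = col x then {x} else if c = d then S else {})"
    using assms by auto
  then show ?thesis by simp
qed

lemma palette_insert_monochrome_eq:
  assumes "finite S" "\<forall>i\<in>S. col i = d" "finite S'" "\<forall>i\<in>S'. col i = d"
    and "col x \<noteq> d" and "card S = card S'"
  shows "palette col \<gamma> (insert x S) = palette col \<gamma> (insert x S')"
proof -
  have "x \<notin> S" "x \<notin> S'" using assms by auto
  then show ?thesis
    using assms card_colour_insert_monochrome[of S col d x] card_colour_insert_monochrome[of S' col d x]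
    by (intro palette_eqI) simp
qed

lemma gpal_eq_palette_insert:
  assumes "finite G" "\<forall>i\<in>G. col i = d" "col x \<noteq> d" "S \<subseteq> G"
  shows "gpal col \<gamma> G (card S) x = palette col \<gamma> (insert x S)"
proof -
  define S' where "S' = (SOME S'. S' \<subseteq> G \<and> card S' = card S)"
  have "S' \<subseteq> G \<and> card S' = card S"
    unfolding S'_def by (rule someI[of _ S]) (use assms in auto)
  then have "palette col \<gamma> (insert x S') = palette col \<gamma> (insert x S)"
    using assms by (intro palette_insert_monochrome_eq) (auto intro: finite_subset)
  then show ?thesis unfolding gpal_def S'_def .
qed

lemma eq_insert_monochrome_if_palette_eq:
  assumes eq: "palette col \<gamma> D = palette col \<gamma> (insert x S)"
    and "finite D" "x \<in> D" and unique: "{i\<in>D. col i = col x} = {x}"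
    and "finite S" "\<forall>i\<in>S. col i = d" "col x \<noteq> d" "col x < \<gamma>" "d < \<gamma>"
  shows "\<exists>T. D = insert x T \<and> card T = card S \<and> (\<forall>i\<in>T. col i = d)"
proof -
  define T where "T = {i\<in>D. col i = d}"
  have "x \<notin> S" using assms by auto
  have card_insert: "card (insert x S) = card S + 1" using \<open>finite S\<close> \<open>x \<notin> S\<close> by simp
  have "card {i\<in>insert x S. col i = col x} = 1" "card {i\<in>insert x S. col i = d} = card S"
    using card_colour_insert_monochrome[of S col d x] assms by simp_all
  then have entry_x: "palette col \<gamma> (insert x S) ! col x = 1 / (real (card S) + 1)"
    and entry_d: "palette col \<gamma> (insert x S) ! d = real (card S) / (real (card S) + 1)"
    using card_insert \<open>col x < \<gamma>\<close> \<open>d < \<gamma>\<close> by (simp_all add: nth_palette)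
  have "1 / real (card D) = 1 / (real (card S) + 1)"
    using entry_x unique \<open>col x < \<gamma>\<close> by (simp add: eq[symmetric] nth_palette)
  then have card_D: "real (card D) = real (card S) + 1" by simp
  have "real (card T) / real (card D) = real (card S) / (real (card S) + 1)"
    using entry_d \<open>d < \<gamma>\<close> unfolding T_def by (simp add: eq[symmetric] nth_palette)
  then have card_T: "card T = card S" using card_D by (simp add: field_simps)
  have "x \<notin> T" "finite T" "insert x T \<subseteq> D" using assms T_def by auto
  then have "insert x T = D" using card_D card_T \<open>finite D\<close> by (intro card_subset_eq) auto
  then show ?thesis using card_T T_def by auto
qed

lemma spref_trans:
  assumes "spref pref i p q" "spref pref i q s"
    and "weak_order_on S (pref i)" "p \<in> S" "q \<in> S" "s \<in> S"
  shows "spref pref i p s"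
  using assms unfolding weak_order_on_def spref_def by metis

lemma spref_above_chain:
  fixes f :: "nat \<Rightarrow> real list" and j m :: nat
  assumes chain: "\<And>j. 1 \<le> j \<Longrightarrow> j < m \<Longrightarrow> spref pref i (f (j+1)) (f j)"
    and wo: "weak_order_on S (pref i)"
    and f_in: "\<And>j. 1 \<le> j \<Longrightarrow> j \<le> m \<Longrightarrow> f j \<in> S" and "p \<in> S"
    and top: "spref pref i p (f m)" and "1 \<le> j" "j \<le> m"
  shows "spref pref i p (f j)"
  using \<open>j \<le> m\<close> top
proof (induction j rule: inc_induct)
  case (step n)
  then have "f (Suc n) \<in> S" "f n \<in> S" "spref pref i (f (Suc n)) (f n)"
    using f_in chain \<open>1 \<le> j\<close> by simp_all
  with step show ?case using spref_trans[of pref i, OF _ _ wo \<open>p \<in> S\<close>] by blast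
qed

lemma spref_below_chain:
  fixes f :: "nat \<Rightarrow> real list" and j m :: nat
  assumes chain: "\<And>j. 1 \<le> j \<Longrightarrow> j < m \<Longrightarrow> spref pref i (f (j+1)) (f j)"
    and wo: "weak_order_on S (pref i)"
    and f_in: "\<And>j. 1 \<le> j \<Longrightarrow> j \<le> m \<Longrightarrow> f j \<in> S" and "q \<in> S"
    and bottom: "spref pref i (f 1) q" and "1 \<le> j" "j \<le> m"
  shows "spref pref i (f j) q"
  using \<open>1 \<le> j\<close> bottom
proof (induction j rule: dec_induct)
  case (step n)
  then have "f (Suc n) \<in> S" "f n \<in> S" "spref pref i (f (Suc n)) (f n)"
    using f_in chain \<open>j \<le> m\<close> by simp_all
  with step show ?case using spref_trans[of pref i, OF _ _ wo _ _ \<open>q \<in> S\<close>] by blast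
qed

lemma coal_eq:
  assumes "partition_on N P" "C \<in> P" "i \<in> C"
  shows "coal P i = C"
  unfolding coal_def
proof (rule the_equality)
  fix C' assume "C' \<in> P \<and> i \<in> C'"
  then show "C' = C" using partition_onD2[OF assms(1)] assms unfolding disjoint_def by blast
qed (use assms in simp)

lemma coal_in_partition:
  assumes "partition_on N P" "i \<in> N"
  shows "coal P i \<in> P" "i \<in> coal P i" "coal P i \<subseteq> N"
proof -
  obtain C where "C \<in> P" "i \<in> C" using partition_onD1[OF assms(1)] assms(2) by blast
  then show "coal P i \<in> P" "i \<in> coal P i" "coal P i \<subseteq> N"
    using coal_eq[OF assms(1)] partition_onD1[OF assms(1)] by auto
qed

lemma IS_devI:
  assumes "C \<in> P" "i \<notin> C"
    and "spref pref i (palette col \<gamma> (insert i C)) (palette col \<gamma> (coal P i))"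
    and "\<forall>j\<in>C. pref j (palette col \<gamma> (insert i C)) (palette col \<gamma> C)"
  shows "IS_dev col \<gamma> pref P i"
  using assms unfolding IS_dev_def by blast

lemma IS_dev_leave:
  assumes "spref pref i (palette col \<gamma> {i}) (palette col \<gamma> (coal P i))"
  shows "IS_dev col \<gamma> pref P i"
  using assms unfolding IS_dev_def by force

lemma not_stable_if_IS_dev:
  assumes "i \<in> N" "IS_dev col \<gamma> pref P i"
  shows "\<not> indiv_stable N col \<gamma> pref P \<and> \<not> nash_stable N col \<gamma> pref P"
  using assms unfolding indiv_stable_def nash_stable_def IS_dev_def NS_dev_def by blast

locale rbg_colouring =
  fixes N :: "'a set" and col :: "'a \<Rightarrow> nat" and \<gamma> :: nat
    and r b :: 'a and cR cB cG :: nat and Gr :: "'a set" and m :: nat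
  assumes finite_N: "finite N"
    and colours_bounded: "\<forall>i\<in>N. col i < \<gamma>"
    and r_in_N: "r \<in> N" and b_in_N: "b \<in> N"
    and cR_neq_cB: "cR \<noteq> cB" and cR_neq_cG: "cR \<noteq> cG" and cB_neq_cG: "cB \<noteq> cG"
    and red_class: "{i\<in>N. col i = cR} = {r}"
    and blue_class: "{i\<in>N. col i = cB} = {b}"
    and green_class: "Gr = {i\<in>N. col i = cG}"
    and card_Gr: "card Gr = m" and m_pos: "1 \<le> m"
begin

abbreviation "pal \<equiv> palette col \<gamma>"
abbreviation "PS \<equiv> palettes N col \<gamma>"
abbreviation "GR j \<equiv> gpal col \<gamma> Gr j r"
abbreviation "GB j \<equiv> gpal col \<gamma> Gr j b"

lemma col_r: "col r = cR" and col_b: "col b = cB"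
  using red_class blue_class by blast+

lemma red_blue_unique: "x \<in> {r, b} \<Longrightarrow> i \<in> N \<Longrightarrow> col i = col x \<Longrightarrow> i = x"
  using red_class blue_class col_r col_b by blast

lemma r_neq_b: "r \<noteq> b"
  using col_r col_b cR_neq_cB by auto

lemma finite_Gr: "finite Gr" and Gr_subset_N: "Gr \<subseteq> N"
  and col_green: "i \<in> Gr \<Longrightarrow> col i = cG"
  using finite_N green_class by auto

lemma red_blue_agent: "x \<in> {r, b} \<Longrightarrow> x \<in> N \<and> x \<notin> Gr \<and> col x \<noteq> cG \<and> col x < \<gamma>"
  using col_r col_b cR_neq_cG cB_neq_cG r_in_N b_in_N colours_bounded col_green by auto

lemma cG_bounded: "cG < \<gamma>"
proof -
  obtain g where "g \<in> Gr" using card_Gr m_pos by fastforce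
  then show ?thesis using colours_bounded Gr_subset_N col_green by auto
qed

lemma gpal_card:
  assumes "x \<in> {r, b}" "S \<subseteq> Gr"
  shows "gpal col \<gamma> Gr (card S) x = pal (insert x S)"
  using gpal_eq_palette_insert[OF finite_Gr _ _ \<open>S \<subseteq> Gr\<close>] col_green red_blue_agent[OF assms(1)]
  by blast

text \<open>Reading the palette of \<open>{x}\<close> as \<open>G\<^sup>0x\<close> lets a lone red or blue agent be treated as one
  sharing its coalition with zero green agents.\<close>

lemma gpal_0: "x \<in> {r, b} \<Longrightarrow> gpal col \<gamma> Gr 0 x = pal {x}"
  using gpal_card[of x "{}"] by simp

lemma gpal_in_PS:
  assumes "x \<in> {r, b}" "j \<le> m"
  shows "gpal col \<gamma> Gr j x \<in> PS"
proof -
  obtain S where "S \<subseteq> Gr" "card S = j"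
    using obtain_subset_with_card_n \<open>j \<le> m\<close> card_Gr by metis
  moreover have "insert x S \<subseteq> N"
    using \<open>S \<subseteq> Gr\<close> Gr_subset_N red_blue_agent[OF assms(1)] by auto
  ultimately show ?thesis
    using gpal_card[OF assms(1) \<open>S \<subseteq> Gr\<close>] palette_in_palettes[of "insert x S" N] \<open>card S = j\<close>
    by simp
qed

end

locale rbg_game = rbg_colouring +
  fixes pref :: "'a \<Rightarrow> real list \<Rightarrow> real list \<Rightarrow> bool" and MG :: "real list set"
  assumes weak_order: "\<And>i. i \<in> N \<Longrightarrow> weak_order_on PS (pref i)"
    and red_top: "spref pref r (pal {r, b}) (GR m)"
    and red_step: "\<And>j. 1 \<le> j \<Longrightarrow> j < m \<Longrightarrow> spref pref r (GR (j+1)) (GR j)"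
    and red_bottom: "spref pref r (GR 1) (pal {r})"
    and red_alone: "\<forall>p\<in>PS. p \<noteq> pal {r, b} \<and> p \<noteq> pal {r} \<and> (\<forall>j\<in>{1..m}. p \<noteq> GR j)
                      \<longrightarrow> spref pref r (pal {r}) p"
    and blue_step: "\<And>j. 1 \<le> j \<Longrightarrow> j < m \<Longrightarrow> spref pref b (GB (j+1)) (GB j)"
    and blue_bottom: "spref pref b (GB 1) (pal {r, b})"
    and blue_RB_over_B: "spref pref b (pal {r, b}) (pal {b})"
    and blue_alone: "\<forall>p\<in>PS. p \<noteq> pal {r, b} \<and> p \<noteq> pal {b} \<and> (\<forall>j\<in>{1..m}. p \<noteq> GB j)
                       \<longrightarrow> spref pref b (pal {b}) p"
    and green_GR_step: "\<And>g j. g \<in> Gr \<Longrightarrow> 1 \<le> j \<Longrightarrow> j < m \<Longrightarrow> spref pref g (GR (j+1)) (GR j)"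
    and green_GR1_over_GBm: "\<And>g. g \<in> Gr \<Longrightarrow> spref pref g (GR 1) (GB m)"
    and green_GB_step: "\<And>g j. g \<in> Gr \<Longrightarrow> 1 \<le> j \<Longrightarrow> j < m \<Longrightarrow> spref pref g (GB (j+1)) (GB j)"
    and green_bottom: "\<And>g. g \<in> Gr \<Longrightarrow> spref pref g (GB 1) (pal Gr)"
    and green_alone: "\<And>g p. g \<in> Gr \<Longrightarrow> p \<in> PS \<Longrightarrow> p \<notin> MG \<Longrightarrow> p \<noteq> pal Gr \<Longrightarrow>
                        (\<forall>j\<in>{1..m}. p \<noteq> GR j \<and> p \<noteq> GB j) \<Longrightarrow> spref pref g (pal Gr) p"
begin

lemma GR_in_PS: "j \<le> m \<Longrightarrow> GR j \<in> PS" and GB_in_PS: "j \<le> m \<Longrightarrow> GB j \<in> PS"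
  using gpal_in_PS by auto

lemma RB_in_PS: "pal {r, b} \<in> PS"
  using r_in_N b_in_N by (auto intro: palette_in_palettes)

lemma red_RB_over_GR:
  assumes "j \<le> m"
  shows "spref pref r (pal {r, b}) (GR j)"
proof -
  have above: "spref pref r (pal {r, b}) (GR k)" if "1 \<le> k" "k \<le> m" for k
    using spref_above_chain[where f = GR, OF red_step weak_order[OF r_in_N] GR_in_PS RB_in_PS red_top that] .
  show ?thesis
  proof (cases "j = 0")
    case True
    have "spref pref r (GR 1) (GR 0)" using red_bottom gpal_0 by simp
    with above[OF order.refl m_pos] show ?thesis
      using True spref_trans[of pref r, OF _ _ weak_order[OF r_in_N] RB_in_PS GR_in_PS[OF m_pos] GR_in_PS[OF le0]]
      by simp
  qed (use above assms in auto)
qed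

lemma red_GR_succ: "j < m \<Longrightarrow> spref pref r (GR (j+1)) (GR j)"
  using red_step red_bottom gpal_0 by (cases "j = 0") auto

lemma blue_GB_over_RB: "1 \<le> k \<Longrightarrow> k \<le> m \<Longrightarrow> spref pref b (GB k) (pal {r, b})"
  using spref_below_chain[where f = GB, OF blue_step weak_order[OF b_in_N] GB_in_PS RB_in_PS blue_bottom] .

lemma green_GR_over_GB:
  assumes "g \<in> Gr" "1 \<le> j" "j \<le> m" "1 \<le> k" "k \<le> m"
  shows "spref pref g (GR j) (GB k)"
proof -
  have wo: "weak_order_on PS (pref g)" using weak_order Gr_subset_N \<open>g \<in> Gr\<close> by auto
  have "spref pref g (GR j) (GB m)"
    using spref_below_chain[where f = GR, OF green_GR_step[OF \<open>g \<in> Gr\<close>] wo GR_in_PS GB_in_PS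
        green_GR1_over_GBm[OF \<open>g \<in> Gr\<close>]] assms m_pos by simp
  then show ?thesis
    using spref_above_chain[where f = GB, OF green_GB_step[OF \<open>g \<in> Gr\<close>] wo GB_in_PS GR_in_PS] assms by simp
qed

lemma green_GB_over_G:
  assumes "g \<in> Gr" "1 \<le> k" "k \<le> m"
  shows "spref pref g (GB k) (pal Gr)"
proof -
  have wo: "weak_order_on PS (pref g)" using weak_order Gr_subset_N \<open>g \<in> Gr\<close> by auto
  have "pal Gr \<in> PS" using Gr_subset_N \<open>g \<in> Gr\<close> by (auto intro: palette_in_palettes)
  then show ?thesis
    using spref_below_chain[where f = GB, OF green_GB_step[OF \<open>g \<in> Gr\<close>] wo GB_in_PS _ green_bottom[OF \<open>g \<in> Gr\<close>]]
      assms by simp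
qed

end

locale rbg_outcome = rbg_game +
  fixes P :: "'a set set"
  assumes partition: "partition_on N P"
begin

abbreviation "has_IS_dev \<equiv> \<exists>i\<in>N. IS_dev col \<gamma> pref P i"

lemmas coal_in = coal_in_partition[OF partition]
lemmas coal_of_member = coal_eq[OF partition]

lemma finite_coal: "i \<in> N \<Longrightarrow> finite (coal P i)"
  using coal_in(3) finite_N finite_subset by blast

lemma coal_eq_RB_if_palette:
  assumes x: "x \<in> {r, b}" and eq: "pal (coal P x) = pal {r, b}"
  shows "coal P x = {r, b}"
proof -
  define y where "y = (if x = r then b else r)"
  have y: "y \<in> {r, b}" "col y \<noteq> col x" "{r, b} = insert x {y}"
    using x r_neq_b col_r col_b cR_neq_cB unfolding y_def by auto
  have "x \<in> N" "col x < \<gamma>" "col y < \<gamma>" using red_blue_agent x y(1) by auto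
  have unique: "{i\<in>coal P x. col i = col x} = {x}"
    using coal_in[OF \<open>x \<in> N\<close>] red_blue_unique[OF x] by blast
  have "pal (coal P x) = pal (insert x {y})" using eq unfolding y(3) .
  from eq_insert_monochrome_if_palette_eq[OF this finite_coal[OF \<open>x \<in> N\<close>] coal_in(2)[OF \<open>x \<in> N\<close>]
      unique _ _ _ \<open>col x < \<gamma>\<close> \<open>col y < \<gamma>\<close>] y(2)
  obtain T where T: "coal P x = insert x T" "card T = 1" "\<forall>i\<in>T. col i = col y"
    by auto
  have "T \<subseteq> N" using T(1) coal_in(3)[OF \<open>x \<in> N\<close>] by blast
  then have "T \<subseteq> {y}" using T(3) red_blue_unique[OF y(1)] by blast
  then have "T = {y}" using \<open>card T = 1\<close> by (metis card.empty subset_singletonD zero_neq_one)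
  then show ?thesis by (simp add: T(1) y(3)[symmetric])
qed

lemma coal_eq_insert_green_if_palette:
  assumes x: "x \<in> {r, b}" and "j \<le> m" and eq: "pal (coal P x) = gpal col \<gamma> Gr j x"
  shows "\<exists>T\<subseteq>Gr. coal P x = insert x T"
proof -
  obtain S where S: "S \<subseteq> Gr" "card S = j"
    using obtain_subset_with_card_n \<open>j \<le> m\<close> card_Gr by metis
  have x_props: "x \<in> N" "col x \<noteq> cG" "col x < \<gamma>" using red_blue_agent[OF x] by auto
  have unique: "{i\<in>coal P x. col i = col x} = {x}"
    using coal_in[OF \<open>x \<in> N\<close>] red_blue_unique[OF x] by blast
  have "pal (coal P x) = pal (insert x S)" using eq gpal_card[OF x S(1)] S(2) by simp
  from eq_insert_monochrome_if_palette_eq[OF this finite_coal[OF \<open>x \<in> N\<close>] coal_in(2)[OF \<open>x \<in> N\<close>]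
      unique finite_subset[OF S(1) finite_Gr] _ x_props(2,3) cG_bounded] S(1) col_green
  obtain T where T: "coal P x = insert x T" "\<forall>i\<in>T. col i = cG"
    by blast
  moreover have "T \<subseteq> N" using T(1) coal_in(3)[OF \<open>x \<in> N\<close>] by blast
  ultimately have "T \<subseteq> Gr" using green_class by blast
  then show ?thesis using T(1) by blast
qed

lemma coal_red_blue_cases:
  assumes x: "x \<in> {r, b}"
  shows "has_IS_dev \<or> coal P x = {r, b} \<or> (\<exists>T\<subseteq>Gr. coal P x = insert x T)"
proof -
  have "x \<in> N" using red_blue_agent[OF x] by blast
  consider (RB) "pal (coal P x) = pal {r, b}"
    | (green) j where "j \<le> m" "pal (coal P x) = gpal col \<gamma> Gr j x"
    | (other) "pal (coal P x) \<noteq> pal {r, b}" "\<forall>j\<le>m. pal (coal P x) \<noteq> gpal col \<gamma> Gr j x"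
    by blast
  then show ?thesis
  proof cases
    case RB
    then show ?thesis using coal_eq_RB_if_palette[OF x] by blast
  next
    case green
    then show ?thesis using coal_eq_insert_green_if_palette[OF x] by blast
  next
    case other
    have in_PS: "pal (coal P x) \<in> PS"
      using coal_in[OF \<open>x \<in> N\<close>] by (intro palette_in_palettes) auto
    have not_alone: "pal (coal P x) \<noteq> pal {x}"
      using other(2)[rule_format, OF le0] gpal_0[OF x] by simp
    have not_green: "\<forall>j\<in>{1..m}. pal (coal P x) \<noteq> gpal col \<gamma> Gr j x" using other(2) by simp
    have alone: "\<forall>p\<in>PS. p \<noteq> pal {r, b} \<and> p \<noteq> pal {x} \<and> (\<forall>j\<in>{1..m}. p \<noteq> gpal col \<gamma> Gr j x)
                   \<longrightarrow> spref pref x (pal {x}) p"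
    proof (cases "x = r")
      case True
      show ?thesis unfolding True by (rule red_alone)
    next
      case False
      then have "x = b" using x by simp
      show ?thesis unfolding \<open>x = b\<close> by (rule blue_alone)
    qed
    have "spref pref x (pal {x}) (pal (coal P x))"
      using alone in_PS other(1) not_alone not_green by blast
    then have "IS_dev col \<gamma> pref P x" by (rule IS_dev_leave)
    then show ?thesis using \<open>x \<in> N\<close> by blast
  qed
qed

lemma IS_dev_red_joins_blue:
  assumes "coal P r = insert r T" "T \<subseteq> Gr" "coal P b = {b}"
  shows "IS_dev col \<gamma> pref P r"
proof (rule IS_devI)
  show "coal P b \<in> P" "r \<notin> coal P b" using coal_in(1)[OF b_in_N] assms(3) r_neq_b by auto
  have "card T \<le> m" using card_mono[OF finite_Gr \<open>T \<subseteq> Gr\<close>] card_Gr by simp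
  moreover have "pal (coal P r) = GR (card T)" using gpal_card[of r T] assms(1,2) by simp
  ultimately show "spref pref r (pal (insert r (coal P b))) (pal (coal P r))"
    using red_RB_over_GR assms(3) by simp
  show "\<forall>j\<in>coal P b. pref j (pal (insert r (coal P b))) (pal (coal P b))"
    using blue_RB_over_B assms(3) unfolding spref_def by simp
qed

lemma IS_dev_green_joins_red:
  assumes Cr: "coal P r = insert r T" "T \<subseteq> Gr"
    and h: "h \<in> Gr" and Ch: "coal P h = insert b U" "U \<subseteq> Gr"
  shows "IS_dev col \<gamma> pref P h"
proof (rule IS_devI)
  have "h \<in> N" using h Gr_subset_N by blast
  show "coal P r \<in> P" using coal_in r_in_N by blast
  show h_notin: "h \<notin> coal P r"
  proof
    assume "h \<in> coal P r"
    then have "coal P h = coal P r" using coal_of_member coal_in r_in_N by blast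
    then show False using Ch Cr r_neq_b red_blue_agent[of b] by auto
  qed
  have "h \<notin> T" "insert h T \<subseteq> Gr" using h_notin Cr h by auto
  then have card_hT: "card (insert h T) = card T + 1"
    using finite_subset[OF Cr(2) finite_Gr] by simp
  then have "card T + 1 \<le> m"
    using card_mono[OF finite_Gr \<open>insert h T \<subseteq> Gr\<close>] card_Gr by simp
  have joined: "pal (insert h (coal P r)) = GR (card T + 1)"
    using gpal_card[of r "insert h T"] \<open>insert h T \<subseteq> Gr\<close> card_hT Cr by (simp add: insert_commute)
  have "h \<in> U" using coal_in(2)[OF \<open>h \<in> N\<close>] Ch h red_blue_agent[of b] by auto
  then have "1 \<le> card U" "card U \<le> m"
    using finite_subset[OF Ch(2) finite_Gr] card_mono[OF finite_Gr Ch(2)] card_Gr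
    by (auto simp: Suc_le_eq card_gt_0_iff)
  moreover have "pal (coal P h) = GB (card U)" using gpal_card[of b U] Ch by simp
  ultimately show "spref pref h (pal (insert h (coal P r))) (pal (coal P h))"
    using joined green_GR_over_GB[OF h] \<open>card T + 1 \<le> m\<close> by simp
  have "spref pref j (GR (card T + 1)) (GR (card T))" if "j \<in> coal P r" for j
  proof (cases "j = r")
    case False
    then have "j \<in> Gr" "1 \<le> card T"
      using that Cr finite_subset[OF Cr(2) finite_Gr] by (auto simp: Suc_le_eq card_gt_0_iff)
    then show ?thesis using green_GR_step \<open>card T + 1 \<le> m\<close> by simp
  qed (use red_GR_succ \<open>card T + 1 \<le> m\<close> in simp)
  then show "\<forall>j\<in>coal P r. pref j (pal (insert h (coal P r))) (pal (coal P r))"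
    using joined gpal_card[of r T] Cr unfolding spref_def by simp
qed

lemma IS_dev_blue_joins_green:
  assumes "coal P b = {r, b}" "C \<in> P" "C \<subseteq> Gr" "C \<noteq> {}"
  shows "IS_dev col \<gamma> pref P b"
proof (rule IS_devI)
  show "C \<in> P" by fact
  show "b \<notin> C" using \<open>C \<subseteq> Gr\<close> red_blue_agent[of b] by auto
  have "1 \<le> card C" "card C \<le> m"
    using finite_subset[OF \<open>C \<subseteq> Gr\<close> finite_Gr] card_mono[OF finite_Gr \<open>C \<subseteq> Gr\<close>] card_Gr \<open>C \<noteq> {}\<close>
    by (auto simp: Suc_le_eq card_gt_0_iff)
  moreover have joined: "pal (insert b C) = GB (card C)" using gpal_card[of b C] \<open>C \<subseteq> Gr\<close> by simp
  ultimately show "spref pref b (pal (insert b C)) (pal (coal P b))"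
    using blue_GB_over_RB assms(1) by simp
  have "pal C = pal Gr"
    using \<open>C \<subseteq> Gr\<close> \<open>C \<noteq> {}\<close> finite_Gr col_green
    by (intro palette_monochrome_eq[where d = cG]) (auto intro: finite_subset)
  then show "\<forall>j\<in>C. pref j (pal (insert b C)) (pal C)"
    using joined green_GB_over_G \<open>C \<subseteq> Gr\<close> \<open>1 \<le> card C\<close> \<open>card C \<le> m\<close> unfolding spref_def by auto
qed

lemma IS_dev_green_leaves:
  assumes g: "g \<in> Gr" and "r \<notin> coal P g" "b \<notin> coal P g" "pal (coal P g) \<notin> MG" "\<not> coal P g \<subseteq> Gr"
  shows "IS_dev col \<gamma> pref P g"
proof (rule IS_dev_leave)
  have "g \<in> N" using g Gr_subset_N by blast
  have not_pure: "pal (coal P g) \<noteq> pal Gr"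
  proof
    assume "pal (coal P g) = pal Gr"
    from monochrome_if_palette_eq[OF this finite_coal[OF \<open>g \<in> N\<close>] finite_Gr _ _ cG_bounded]
    have "\<forall>i\<in>coal P g. col i = cG" using g col_green by blast
    then show False using \<open>\<not> coal P g \<subseteq> Gr\<close> coal_in(3)[OF \<open>g \<in> N\<close>] green_class by auto
  qed
  have not_with: "pal (coal P g) \<noteq> gpal col \<gamma> Gr j x"
    if x: "x \<in> {r, b}" "x \<notin> coal P g" and "j \<le> m" for x j
  proof
    assume eq: "pal (coal P g) = gpal col \<gamma> Gr j x"
    obtain S where "S \<subseteq> Gr" "card S = j"
      using obtain_subset_with_card_n \<open>j \<le> m\<close> card_Gr by metis
    then have "pal (coal P g) = pal (insert x S)" using gpal_card[OF x(1)] eq by metis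
    moreover have "finite (insert x S)" using finite_subset[OF \<open>S \<subseteq> Gr\<close> finite_Gr] by simp
    ultimately have "\<exists>i\<in>coal P g. col i = col x"
      using red_blue_agent[OF x(1)] by (intro colour_in_if_palette_eq[OF _ _ insertI1]) auto
    then obtain i where "i \<in> coal P g" "col i = col x" by blast
    then show False
      using red_blue_unique[OF x(1)] coal_in(3)[OF \<open>g \<in> N\<close>] x(2) by blast
  qed
  have in_PS: "pal (coal P g) \<in> PS"
    using coal_in[OF \<open>g \<in> N\<close>] by (intro palette_in_palettes) auto
  have "\<forall>j\<in>{1..m}. pal (coal P g) \<noteq> GR j \<and> pal (coal P g) \<noteq> GB j"
    using not_with[of r] not_with[of b] assms(2,3) by simp
  then have "spref pref g (pal Gr) (pal (coal P g))"
    using green_alone[OF g in_PS assms(4) not_pure] by blast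
  moreover have "pal {g} = pal Gr"
    using g finite_Gr col_green by (intro palette_monochrome_eq[where d = cG]) auto
  ultimately show "spref pref g (pal {g}) (pal (coal P g))" by simp
qed

lemma IS_dev_if_red_with_blue:
  assumes Cr: "coal P r = {r, b}" and g: "g \<in> Gr" "pal (coal P g) \<notin> MG"
  shows has_IS_dev
proof -
  have "g \<in> N" using g Gr_subset_N by blast
  have Cb: "coal P b = {r, b}"
    using coal_of_member[OF coal_in(1)[OF r_in_N]] Cr by simp
  have "x \<notin> coal P g" if "x \<in> {r, b}" for x
  proof
    assume "x \<in> coal P g"
    then have "coal P x = coal P g" by (rule coal_of_member[OF coal_in(1)[OF \<open>g \<in> N\<close>]])
    moreover have "coal P x = {r, b}" using that Cr Cb by auto
    ultimately show False
      using coal_in(2)[OF \<open>g \<in> N\<close>] g(1) red_blue_agent by auto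
  qed
  then have "r \<notin> coal P g" "b \<notin> coal P g" by auto
  show ?thesis
  proof (cases "coal P g \<subseteq> Gr")
    case True
    have "IS_dev col \<gamma> pref P b"
      using coal_in(2)[OF \<open>g \<in> N\<close>] by (intro IS_dev_blue_joins_green[OF Cb coal_in(1)[OF \<open>g \<in> N\<close>] True]) auto
    then show ?thesis using b_in_N by blast
  next
    case False
    have "IS_dev col \<gamma> pref P g"
      by (rule IS_dev_green_leaves[OF g(1) \<open>r \<notin> coal P g\<close> \<open>b \<notin> coal P g\<close> g(2) False])
    then show ?thesis using \<open>g \<in> N\<close> by blast
  qed
qed

lemma IS_dev_if_red_blue_apart:
  assumes Cr: "coal P r = insert r T" "T \<subseteq> Gr" and Cb: "coal P b = insert b U" "U \<subseteq> Gr"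
  shows has_IS_dev
proof (cases "U = {}")
  case True
  have "IS_dev col \<gamma> pref P r" using IS_dev_red_joins_blue[OF Cr] Cb True by simp
  then show ?thesis using r_in_N by blast
next
  case False
  then obtain h where "h \<in> U" by blast
  then have "h \<in> Gr" "h \<in> coal P b" using Cb by auto
  then have "coal P h = insert b U" using coal_of_member[OF coal_in(1)[OF b_in_N]] Cb(1) by simp
  then have "IS_dev col \<gamma> pref P h" by (rule IS_dev_green_joins_red[OF Cr \<open>h \<in> Gr\<close> _ Cb(2)])
  then show ?thesis using \<open>h \<in> Gr\<close> Gr_subset_N by blast
qed

lemma IS_dev_exists:
  assumes "g \<in> Gr" "pal (coal P g) \<notin> MG"
  shows has_IS_dev
proof -
  have "coal P r = {r, b}" if "coal P b = {r, b}"
    using coal_of_member[OF coal_in(1)[OF b_in_N]] that by simp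
  moreover have "has_IS_dev \<or> coal P r = {r, b} \<or> (\<exists>T\<subseteq>Gr. coal P r = insert r T)"
    and "has_IS_dev \<or> coal P b = {r, b} \<or> (\<exists>U\<subseteq>Gr. coal P b = insert b U)"
    by (simp_all add: coal_red_blue_cases)
  ultimately show ?thesis
    using IS_dev_if_red_with_blue[OF _ assms] IS_dev_if_red_blue_apart by blast
qed

end

theorem mainTheorem6:
  fixes N :: "'a set" and col :: "'a \<Rightarrow> nat" and \<gamma> :: nat
    and pref :: "'a \<Rightarrow> real list \<Rightarrow> real list \<Rightarrow> bool"
    and r b :: 'a and cR cB cG m :: nat and MG :: "real list set"
  assumes finN: "finite N"
    and colors: "\<forall>i\<in>N. col i < \<gamma>"
    and weak: "\<forall>i\<in>N. weak_order_on (palettes N col \<gamma>) (pref i)"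
    and rN: "r \<in> N" and bN: "b \<in> N"
    and distinct_cols: "cR \<noteq> cB" "cR \<noteq> cG" "cB \<noteq> cG"
    and red: "{i\<in>N. col i = cR} = {r}"
    and blue: "{i\<in>N. col i = cB} = {b}"
    and green_card: "card {i\<in>N. col i = cG} = m" and m1: "m \<ge> 1"
    and MG: "\<forall>p\<in>MG. \<exists>X. X \<subseteq> N \<and> p = palette col \<gamma> X \<and> (\<exists>i\<in>X. col i = cG)
                      \<and> (\<exists>i\<in>X. col i \<notin> {cR, cB, cG})"
    and prefR:
      "spref pref r (palette col \<gamma> {r, b}) (gpal col \<gamma> {i\<in>N. col i = cG} m r)"
      "\<forall>j. 1 \<le> j \<and> j < m \<longrightarrow> spref pref r (gpal col \<gamma> {i\<in>N. col i = cG} (j+1) r)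
                                            (gpal col \<gamma> {i\<in>N. col i = cG} j r)"
      "spref pref r (gpal col \<gamma> {i\<in>N. col i = cG} 1 r) (palette col \<gamma> {r})"
      "\<forall>p \<in> palettes N col \<gamma>. p \<noteq> palette col \<gamma> {r, b} \<and> p \<noteq> palette col \<gamma> {r}
          \<and> (\<forall>j\<in>{1..m}. p \<noteq> gpal col \<gamma> {i\<in>N. col i = cG} j r)
          \<longrightarrow> spref pref r (palette col \<gamma> {r}) p"
    and prefB:
      "\<forall>j. 1 \<le> j \<and> j < m \<longrightarrow> spref pref b (gpal col \<gamma> {i\<in>N. col i = cG} (j+1) b)
                                            (gpal col \<gamma> {i\<in>N. col i = cG} j b)"
      "spref pref b (gpal col \<gamma> {i\<in>N. col i = cG} 1 b) (palette col \<gamma> {r, b})"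
      "spref pref b (palette col \<gamma> {r, b}) (palette col \<gamma> {b})"
      "\<forall>p \<in> palettes N col \<gamma>. p \<noteq> palette col \<gamma> {r, b} \<and> p \<noteq> palette col \<gamma> {b}
          \<and> (\<forall>j\<in>{1..m}. p \<noteq> gpal col \<gamma> {i\<in>N. col i = cG} j b)
          \<longrightarrow> spref pref b (palette col \<gamma> {b}) p"
    and prefG: "\<forall>g\<in>{i\<in>N. col i = cG}.
      (\<forall>p\<in>MG. spref pref g p (gpal col \<gamma> {i\<in>N. col i = cG} m r)) \<and>
      (\<forall>j. 1 \<le> j \<and> j < m \<longrightarrow> spref pref g (gpal col \<gamma> {i\<in>N. col i = cG} (j+1) r)
                                            (gpal col \<gamma> {i\<in>N. col i = cG} j r)) \<and>
      spref pref g (gpal col \<gamma> {i\<in>N. col i = cG} 1 r) (gpal col \<gamma> {i\<in>N. col i = cG} m b) \<and>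
      (\<forall>j. 1 \<le> j \<and> j < m \<longrightarrow> spref pref g (gpal col \<gamma> {i\<in>N. col i = cG} (j+1) b)
                                            (gpal col \<gamma> {i\<in>N. col i = cG} j b)) \<and>
      spref pref g (gpal col \<gamma> {i\<in>N. col i = cG} 1 b) (palette col \<gamma> {i\<in>N. col i = cG}) \<and>
      (\<forall>p \<in> palettes N col \<gamma>. p \<notin> MG \<and> p \<noteq> palette col \<gamma> {i\<in>N. col i = cG}
          \<and> (\<forall>j\<in>{1..m}. p \<noteq> gpal col \<gamma> {i\<in>N. col i = cG} j r
                         \<and> p \<noteq> gpal col \<gamma> {i\<in>N. col i = cG} j b)
          \<longrightarrow> spref pref g (palette col \<gamma> {i\<in>N. col i = cG}) p)"
  shows "\<forall>P. partition_on N P \<and>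
            (\<exists>g\<in>{i\<in>N. col i = cG}. palette col \<gamma> (coal P g) \<notin> MG)
          \<longrightarrow> \<not> indiv_stable N col \<gamma> pref P \<and> \<not> nash_stable N col \<gamma> pref P"
proof (intro allI impI)
  fix P
  assume "partition_on N P \<and> (\<exists>g\<in>{i\<in>N. col i = cG}. palette col \<gamma> (coal P g) \<notin> MG)"
  then obtain g where part: "partition_on N P"
    and g: "g \<in> {i\<in>N. col i = cG}" "palette col \<gamma> (coal P g) \<notin> MG"
    by blast
  interpret rbg_outcome N col \<gamma> r b cR cB cG "{i\<in>N. col i = cG}" m pref MG P
    using assms part by unfold_locales simp_all
  obtain i where "i \<in> N" "IS_dev col \<gamma> pref P i" using IS_dev_exists[OF g] by blast
  then show "\<not> indiv_stable N col \<gamma> pref P \<and> \<not> nash_stable N col \<gamma> pref P"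
    by (rule not_stable_if_IS_dev)
qed

end
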